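(* Let $N\ge1$. For every $\Lambda\subseteq P_N$ and $\sigma\in S_N$, the maps $T_\Lambda$ and $R_\sigma$ are homeomorphisms of $\mathbb{D}_N$ onto itself satisfying $\pi\circ T_\Lambda=\pi$ and $\pi\circ R_\sigma=\pi$, i.e. they lie in $\mathrm{Aut}(\mathbb{D}_N)_\pi$. Furthermore, if $\mathfrak{T}_N$ and $\mathfrak{R}_N$ denote the groups generated by the $T_\Lambda$ and by the $R_\sigma$ respectively, then the set $\mathfrak{T}_N\mathfrak{R}_N$ equipped with the operation $$T_{\Lambda_1}R_{\sigma_1}\cdot T_{\Lambda_2}R_{\sigma_2}=T_{\Lambda_1\oplus\sigma_1(\Lambda_2)}R_{\sigma_1\sigma_2}\qquad(\Lambda_i\subseteq P_N,\ \sigma_i\in S_N)$$ is a group isomorphic to the outer semidirect product $\{\pm1\}^N\rtimes_\varphi S_N$ with respect to $\varphi:S_N\to\mathrm{Aut}(\{\pm1\}^N)$, $\varphi_\sigma(\varepsilon_1,\dots,\varepsilon_N)=(\varepsilon_{\sigma^{-1}(1)},\dots,\varepsilon_{\sigma^{-1}(N)})$.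
   Context: $P_N=\{1,\dots,N\}$; vectors $v\in\mathbb{C}^N$ are functions on $P_N$, $v^{-1}[S]=\{\ell:v_\ell\in S\}$; $\mathrm{Tr}(v,\Lambda):=\sum_{\ell\in\Lambda}v_\ell$; $\oplus$ is symmetric difference of sets. $\mathcal{C}:=\{z\in\mathbb{C}:\mathrm{Re}(z)>0\text{ or }z\in i\mathbb{R}_{>0}\}$. $\mathbb{D}_N:=\{(w,a,\theta)\in\mathbb{C}\times\mathbb{C}^N\times\mathbb{R}^N: a^{-1}[0]\subseteq\theta^{-1}[\mathbb{R}\smallsetminus\mathbb{Z}]\}$ (i.e. $\theta_\ell\notin\mathbb{Z}$ whenever $a_\ell=0$), with the subspace topology. $\pi:\mathbb{D}_N\to\mathbb{C}$, $\pi(w,a,\theta):=w-\mathrm{Tr}(a,a^{-1}[-\mathcal{C}])$. $\mathrm{Aut}(\mathbb{D}_N)$ is the group of homeomorphisms of $\mathbb{D}_N$ and $\mathrm{Aut}(\mathbb{D}_N)_\pi:=\{g\in\mathrm{Aut}(\mathbb{D}_N):\pi\circ g=\pi\}$. For $\Lambda\subseteq P_N$, $d(\Lambda)$ is the $N\times N$ diagonal matrix with $(\ell,\ell)$-entry $-1$ if $\ell\in\Lambda$, $1$ otherwise, and $T_\Lambda(w,a,\theta):=(w-\mathrm{Tr}(a,\Lambda),\,a\,d(\Lambda),\,\theta\,d(\Lambda))$ (row vectors). For $\sigma\in S_N$, $r(\sigma)$ is the $N\times N$ matrix whose $\ell$-th column is the $\sigma^{-1}(\ell)$-th column of the identity matrix,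 and $R_\sigma(w,a,\theta):=(w,\,a\,r(\sigma),\,\theta\,r(\sigma))$. *)

theory Defs
  imports "HOL-Analysis.Analysis" "HOL-Algebra.Bij" "HOL-Algebra.Coset" "HOL-Algebra.Generated_Groups"
begin

text \<open>Index set P_N is modelled by a finite type 'n (N = CARD('n) >= 1).
  Points of C x C^N x R^N are triples (w, a, theta).\<close>

type_synonym 'n pt = "complex \<times> (complex ^ 'n) \<times> (real ^ 'n)"

definition Cset :: "complex set" where
  "Cset = {z. Re z > 0 \<or> (Re z = 0 \<and> Im z > 0)}"

definition Tr :: "complex ^ 'n \<Rightarrow> 'n set \<Rightarrow> complex" where
  "Tr v L = (\<Sum>l\<in>L. v $ l)"

definition DD :: "('n::finite) pt set" where
  "DD = {(w, a, th). \<forall>l. a $ l = 0 \<longrightarrow> th $ l \<notin> \<int>}"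

definition piD :: "('n::finite) pt \<Rightarrow> complex" where
  "piD p = (case p of (w, a, th) \<Rightarrow> w - Tr a {l. a $ l \<in> uminus ` Cset})"

text \<open>Row vector times the diagonal matrix d(Lambda): flip signs on Lambda.\<close>
definition flipc :: "complex ^ 'n \<Rightarrow> 'n set \<Rightarrow> complex ^ 'n" where
  "flipc v L = (\<chi> l. if l \<in> L then - (v $ l) else v $ l)"
definition flipr :: "real ^ 'n \<Rightarrow> 'n set \<Rightarrow> real ^ 'n" where
  "flipr v L = (\<chi> l. if l \<in> L then - (v $ l) else v $ l)"

definition TT :: "'n set \<Rightarrow> ('n::finite) pt \<Rightarrow> 'n pt" where
  "TT L p = (case p of (w, a, th) \<Rightarrow> (w - Tr a L, flipc a L, flipr th L))"

text \<open>Row vector times r(sigma): the l-th entry becomes the sigma^{-1}(l)-th entry.\<close>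
definition RR :: "('n \<Rightarrow> 'n) \<Rightarrow> ('n::finite) pt \<Rightarrow> 'n pt" where
  "RR s p = (case p of (w, a, th) \<Rightarrow>
     (w, (\<chi> l. a $ (inv_into UNIV s l)), (\<chi> l. th $ (inv_into UNIV s l))))"

definition Aut_pi :: "(('n::finite) pt \<Rightarrow> 'n pt) \<Rightarrow> bool" where
  "Aut_pi f \<longleftrightarrow> (\<exists>g. homeomorphism DD DD f g) \<and> (\<forall>x\<in>DD. piD (f x) = piD x)"

definition TgrpN :: "(('n::finite) pt \<Rightarrow> 'n pt) set" where
  "TgrpN = generate (BijGroup DD) {restrict (TT L) DD | L. True}"
definition RgrpN :: "(('n::finite) pt \<Rightarrow> 'n pt) set" where
  "RgrpN = generate (BijGroup DD) {restrict (RR s) DD | s. s permutes UNIV}"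

definition TRgroup :: "(('n::finite) pt \<Rightarrow> 'n pt) monoid" where
  "TRgroup = \<lparr> carrier = TgrpN <#>\<^bsub>BijGroup DD\<^esub> RgrpN,
     mult = (\<lambda>f g. THE h. \<exists>L1 s1 L2 s2.
        s1 permutes UNIV \<and> s2 permutes UNIV \<and>
        f = restrict (TT L1 \<circ> RR s1) DD \<and> g = restrict (TT L2 \<circ> RR s2) DD \<and>
        h = restrict (TT (L1 \<union> s1 ` L2 - L1 \<inter> s1 ` L2) \<circ> RR (s1 \<circ> s2)) DD),
     one = restrict id DD \<rparr>"

definition signperm_sdp :: "(('n::finite \<Rightarrow> int) \<times> ('n \<Rightarrow> 'n)) monoid" where
  "signperm_sdp = \<lparr> carrier = {(e, s). (\<forall>i. e i \<in> {-1, 1}) \<and> s permutes UNIV},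
     mult = (\<lambda>(e1, s1) (e2, s2). ((\<lambda>i. e1 i * e2 (inv_into UNIV s1 i)), s1 \<circ> s2)),
     one = ((\<lambda>i. 1), id) \<rparr>"

end

(*
  T_\<Lambda> and R_\<sigma> are continuous, map D_N into itself and have continuous inverses
  (T_\<Lambda> is an involution, R_\<sigma> is inverted by R_(\<sigma>^-1)). They preserve \<pi>: a permutation only
  reindexes the sum over a^-1[-C], and since exactly one of a_l, -a_l lies in -C when a_l \<noteq> 0,
  flipping the sign of a_l moves its contribution between w and that sum.

  For the group structure the essential point is that a map T_\<Lambda> R_\<sigma> on D_N determines \<Lambda> and \<sigma>
  (evaluate it on the points whose a-coordinate is a unit vector). Hence the product on
  representatives is well defined, and \<epsilon> \<mapsto> {l. \<epsilon>_l = -1} turns it into the multiplication of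
  {\<plusminus>1}^N \<rtimes> S_N, through which the group axioms are transported.
*)
theory Submission
  imports Defs
begin

lemma Tr_eq_sum_UNIV: "Tr a L = (\<Sum>l\<in>UNIV. if l \<in> L then a $ l else 0)"
  unfolding Tr_def by (simp add: sum.If_cases)

lemma TT_apply: "TT L (w, a, th) = (w - Tr a L, flipc a L, flipr th L)"
  by (simp add: TT_def)

lemma RR_apply: "RR s (w, a, th) = (w, (\<chi> l. a $ inv_into UNIV s l), (\<chi> l. th $ inv_into UNIV s l))"
  by (simp add: RR_def)

lemma TT_empty: "TT {} p = p"
  by (cases p) (simp add: TT_apply Tr_def flipc_def flipr_def vec_eq_iff)

lemma TT_TT: "TT L1 (TT L2 p) = TT (L1 \<union> L2 - L1 \<inter> L2) p"
proof -
  obtain w a th where p: "p = (w, a, th)" by (cases p)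
  have "Tr a L2 + Tr (flipc a L2) L1 = Tr a (L1 \<union> L2 - L1 \<inter> L2)"
    unfolding Tr_eq_sum_UNIV sum.distrib[symmetric] by (rule sum.cong) (auto simp: flipc_def)
  then show ?thesis
    by (simp add: p TT_apply flipc_def flipr_def vec_eq_iff algebra_simps)
qed

lemma TT_TT_cancel: "TT L (TT L p) = p"
  by (simp add: TT_TT TT_empty)

lemma RR_id: "RR id p = p"
  by (cases p) (simp add: RR_apply vec_eq_iff)

lemma RR_RR:
  assumes "s1 permutes UNIV" "s2 permutes UNIV"
  shows "RR s1 (RR s2 p) = RR (s1 \<circ> s2) p"
proof -
  have "inv_into UNIV (s1 \<circ> s2) = inv_into UNIV s2 \<circ> inv_into UNIV s1"
    using assms by (simp add: o_inv_distrib permutes_bij)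
  then show ?thesis by (cases p) (simp add: RR_apply vec_eq_iff)
qed

lemma RR_RR_inv: "s permutes UNIV \<Longrightarrow> RR s (RR (inv_into UNIV s) p) = p"
  by (simp add: RR_RR permutes_inv permutes_inv_o RR_id)

lemma RR_inv_RR: "s permutes UNIV \<Longrightarrow> RR (inv_into UNIV s) (RR s p) = p"
  by (simp add: RR_RR permutes_inv permutes_inv_o RR_id)

lemma TT_in_DD: "p \<in> DD \<Longrightarrow> TT L p \<in> DD"
  by (cases p) (auto simp: DD_def TT_apply flipc_def flipr_def split: if_splits)

lemma RR_in_DD: "p \<in> DD \<Longrightarrow> RR s p \<in> DD"
  by (cases p) (auto simp: DD_def RR_apply)

lemma continuous_on_TT: "continuous_on S (TT L)"
proof -
  have "TT L = (\<lambda>p. (fst p - (\<Sum>l\<in>L. fst (snd p) $ l),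
      (\<chi> l. (if l \<in> L then -1 else 1) * fst (snd p) $ l),
      (\<chi> l. (if l \<in> L then -1 else 1) * snd (snd p) $ l)))"
    by (auto simp: fun_eq_iff TT_def Tr_def flipc_def flipr_def vec_eq_iff)
  then show ?thesis by (simp add: continuous_intros)
qed

lemma continuous_on_RR: "continuous_on S (RR s)"
proof -
  have "RR s = (\<lambda>p. (fst p, (\<chi> l. fst (snd p) $ inv_into UNIV s l), (\<chi> l. snd (snd p) $ inv_into UNIV s l)))"
    by (auto simp: fun_eq_iff RR_def)
  then show ?thesis by (simp add: continuous_intros)
qed

section \<open>Automorphisms over \<open>\<pi>\<close>\<close>

lemma uminus_in_Cset_iff: "a \<noteq> 0 \<Longrightarrow> - a \<in> Cset \<longleftrightarrow> a \<notin> Cset"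
  by (auto simp: Cset_def complex_eq_iff)

lemma in_uminus_image_iff: "(a::'a::group_add) \<in> uminus ` A \<longleftrightarrow> - a \<in> A"
  by force

lemma uminus_Cset_iff: "a \<noteq> 0 \<Longrightarrow> - a \<in> uminus ` Cset \<longleftrightarrow> a \<notin> uminus ` Cset"
  by (simp add: in_uminus_image_iff uminus_in_Cset_iff)

lemma piD_TT: "piD (TT L p) = piD p"
proof -
  obtain w a th where p: "p = (w, a, th)" by (cases p)
  let ?negC = "\<lambda>v. {l. v $ l \<in> uminus ` Cset}"
  have "Tr a L + Tr (flipc a L) (?negC (flipc a L)) = Tr a (?negC a)"
    unfolding Tr_eq_sum_UNIV sum.distrib[symmetric]
    by (rule sum.cong) (use uminus_Cset_iff in \<open>auto simp: flipc_def\<close>)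
  then show ?thesis
    by (simp add: p TT_apply piD_def algebra_simps)
qed

lemma piD_RR:
  assumes "s permutes UNIV"
  shows "piD (RR s p) = piD p"
proof -
  obtain w a th where p: "p = (w, a, th)" by (cases p)
  have "Tr (\<chi> l. a $ inv_into UNIV s l) {l. a $ inv_into UNIV s l \<in> uminus ` Cset}
      = Tr a {l. a $ l \<in> uminus ` Cset}"
    unfolding Tr_eq_sum_UNIV
    using sum.permute[OF permutes_inv[OF assms], of "\<lambda>m. if a $ m \<in> uminus ` Cset then a $ m else 0"]
    by (simp add: o_def cong: if_cong)
  then show ?thesis by (simp add: p RR_apply piD_def)
qed

lemma Aut_piI:
  assumes "continuous_on DD f" "continuous_on DD g"
    and "\<And>p. p \<in> DD \<Longrightarrow> f p \<in> DD" "\<And>p. p \<in> DD \<Longrightarrow> g p \<in> DD"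
    and "\<And>p. g (f p) = p" "\<And>p. f (g p) = p"
    and "\<And>p. piD (f p) = piD p"
  shows "Aut_pi f"
  unfolding Aut_pi_def using assms by (blast intro: homeomorphismI)

lemma Aut_pi_TT: "Aut_pi (TT L)"
  by (rule Aut_piI[where g = "TT L"])
     (simp_all add: continuous_on_TT TT_in_DD TT_TT_cancel piD_TT)

lemma Aut_pi_RR: "s permutes UNIV \<Longrightarrow> Aut_pi (RR s)"
  by (rule Aut_piI[where g = "RR (inv_into UNIV s)"])
     (simp_all add: continuous_on_RR RR_in_DD RR_RR_inv RR_inv_RR piD_RR)

section \<open>Uniqueness of the representation \<open>T\<^sub>\<Lambda> R\<^sub>\<sigma>\<close>\<close>

lemma TT_RR_a_component:
  "fst (snd (TT L (RR s (w, a, th)))) $ l = (if l \<in> L then -1 else 1) * a $ inv_into UNIV s l"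
  by (simp add: TT_apply RR_apply flipc_def)

lemma TT_RR_unique:
  assumes s1: "s1 permutes UNIV" and s2: "s2 permutes UNIV"
    and eq: "restrict (TT L1 \<circ> RR s1) DD = restrict (TT L2 \<circ> RR s2) DD"
  shows "L1 = L2 \<and> s1 = s2"
proof -
  \<comment> \<open>\<open>T\<^sub>\<Lambda> R\<^sub>\<sigma>\<close> sends \<open>a = e\<^sub>k\<close> to \<open>\<plusminus>e\<^sub>\<sigma>\<^sub>(\<^sub>k\<^sub>)\<close>, with sign \<open>-\<close> iff \<open>\<sigma>(k) \<in> \<Lambda>\<close>;
    \<open>\<theta> = 1/2\<close> only serves to put the test point into \<open>D\<^sub>N\<close>\<close>
  have at_s1: "s2 k = s1 k \<and> (s1 k \<in> L1 \<longleftrightarrow> s1 k \<in> L2)" for k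
  proof -
    define p :: "'a pt" where "p = (0, \<chi> l. if l = k then 1 else 0, \<chi> l. 1/2)"
    have "p \<in> DD" by (simp add: DD_def p_def)
    then have "TT L1 (RR s1 p) = TT L2 (RR s2 p)"
      using eq by (metis comp_apply restrict_apply')
    then have "fst (snd (TT L1 (RR s1 p))) $ s1 k = fst (snd (TT L2 (RR s2 p))) $ s1 k"
      by simp
    then have signs: "(if s1 k \<in> L1 then -1 else 1)
        = (if s1 k \<in> L2 then -1 else 1) * (if inv_into UNIV s2 (s1 k) = k then 1 else 0 :: complex)"
      unfolding p_def TT_RR_a_component by (simp add: permutes_inverses[OF s1])
    then have "inv_into UNIV s2 (s1 k) = k"
      by (cases "s1 k \<in> L1") (auto split: if_splits)
    with signs show ?thesis
      by (auto simp: permutes_inv_eq[OF s2] split: if_splits)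
  qed
  then have "s1 = s2" by auto
  moreover have "L1 = L2"
    using at_s1 by (metis permutes_inverses(1)[OF s1] subsetI subset_antisym)
  ultimately show ?thesis by simp
qed

lemma restrict_in_BijGroup:
  assumes "f ` S \<subseteq> S" "g ` S \<subseteq> S" "\<And>x. x \<in> S \<Longrightarrow> g (f x) = x" "\<And>x. x \<in> S \<Longrightarrow> f (g x) = x"
  shows "restrict f S \<in> carrier (BijGroup S)"
proof -
  have "bij_betw f S S"
    using assms by (intro bij_betw_byWitness[where f' = g]) auto
  then show ?thesis
    by (simp add: BijGroup_def Bij_def)
qed

lemma BijGroup_mult_restrict:
  assumes "restrict f S \<in> carrier (BijGroup S)" "restrict g S \<in> carrier (BijGroup S)" "g ` S \<subseteq> S"
  shows "restrict f S \<otimes>\<^bsub>BijGroup S\<^esub> restrict g S = restrict (f \<circ> g) S"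
  using assms by (auto simp: BijGroup_def compose_def fun_eq_iff)

lemma BijGroup_one_restrict: "\<one>\<^bsub>BijGroup S\<^esub> = restrict id S"
  by (simp add: BijGroup_def fun_eq_iff)

lemma (in group) generate_eqI:
  assumes "H \<subseteq> carrier G" "\<one> \<in> H" "\<And>a b. a \<in> H \<Longrightarrow> b \<in> H \<Longrightarrow> a \<otimes> b \<in> H"
    and "\<And>a. a \<in> H \<Longrightarrow> \<exists>b\<in>H. b \<otimes> a = \<one>"
  shows "generate G H = H"
proof -
  have "subgroup H G"
  proof (rule subgroupI)
    show "inv a \<in> H" if a: "a \<in> H" for a
    proof -
      obtain b where "b \<in> H" "b \<otimes> a = \<one>"
        using assms(4) a by blast
      with assms(1) a show ?thesis
        using inv_equality by (metis subsetD)
    qed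
  qed (use assms(1-3) in blast)+
  then show ?thesis
    by (rule generateI[symmetric]) simp_all
qed

lemma TT_in_BijGroup: "restrict (TT L) DD \<in> carrier (BijGroup DD)"
  by (rule restrict_in_BijGroup[where g = "TT L"]) (auto simp: TT_in_DD TT_TT_cancel)

lemma RR_in_BijGroup: "s permutes UNIV \<Longrightarrow> restrict (RR s) DD \<in> carrier (BijGroup DD)"
  by (rule restrict_in_BijGroup[where g = "RR (inv_into UNIV s)"]) (auto simp: RR_in_DD RR_RR_inv RR_inv_RR)

lemma TT_mult_TT:
  "restrict (TT L1) DD \<otimes>\<^bsub>BijGroup DD\<^esub> restrict (TT L2) DD = restrict (TT (L1 \<union> L2 - L1 \<inter> L2)) DD"
  by (simp add: BijGroup_mult_restrict TT_in_BijGroup image_subsetI TT_in_DD o_def TT_TT)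

lemma RR_mult_RR:
  "s1 permutes UNIV \<Longrightarrow> s2 permutes UNIV \<Longrightarrow>
    restrict (RR s1) DD \<otimes>\<^bsub>BijGroup DD\<^esub> restrict (RR s2) DD = restrict (RR (s1 \<circ> s2)) DD"
  by (simp add: BijGroup_mult_restrict RR_in_BijGroup image_subsetI RR_in_DD o_def RR_RR)

lemma TT_mult_RR:
  "s permutes UNIV \<Longrightarrow>
    restrict (TT L) DD \<otimes>\<^bsub>BijGroup DD\<^esub> restrict (RR s) DD = restrict (TT L \<circ> RR s) DD"
  by (simp add: BijGroup_mult_restrict TT_in_BijGroup RR_in_BijGroup image_subsetI RR_in_DD)

lemma TgrpN_eq: "(TgrpN :: ('n::finite pt \<Rightarrow> 'n pt) set) = {restrict (TT L) DD | L. True}"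
  unfolding TgrpN_def
proof (rule group.generate_eqI[OF group_BijGroup])
  have one: "\<one>\<^bsub>BijGroup DD\<^esub> = restrict (TT {}) DD"
    by (simp add: BijGroup_one_restrict TT_empty fun_eq_iff)
  then show "\<one>\<^bsub>BijGroup DD\<^esub> \<in> {restrict (TT L) DD | L. True}"
    by blast
  show "\<exists>b\<in>{restrict (TT L) DD | L. True}. b \<otimes>\<^bsub>BijGroup DD\<^esub> a = \<one>\<^bsub>BijGroup DD\<^esub>"
    if "a \<in> {restrict (TT L) DD | L. True}" for a :: "'n pt \<Rightarrow> 'n pt"
    using that by (auto simp: one TT_mult_TT)
qed (auto simp: TT_in_BijGroup TT_mult_TT)

lemma RgrpN_eq: "(RgrpN :: ('n::finite pt \<Rightarrow> 'n pt) set) = {restrict (RR s) DD | s. s permutes UNIV}"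
  unfolding RgrpN_def
proof (rule group.generate_eqI[OF group_BijGroup])
  have one: "\<one>\<^bsub>BijGroup DD\<^esub> = restrict (RR id) DD"
    by (simp add: BijGroup_one_restrict RR_id fun_eq_iff)
  then show "\<one>\<^bsub>BijGroup DD\<^esub> \<in> {restrict (RR s) DD | s. s permutes UNIV}"
    using permutes_id by blast
  show "\<exists>b\<in>{restrict (RR s) DD | s. s permutes UNIV}. b \<otimes>\<^bsub>BijGroup DD\<^esub> a = \<one>\<^bsub>BijGroup DD\<^esub>"
    if a_in: "a \<in> {restrict (RR s) DD | s. s permutes UNIV}" for a :: "'n pt \<Rightarrow> 'n pt"
  proof -
    obtain s where s: "s permutes UNIV" and a: "a = restrict (RR s) DD"
      using a_in by blast
    have "restrict (RR (inv_into UNIV s)) DD \<otimes>\<^bsub>BijGroup DD\<^esub> a = \<one>\<^bsub>BijGroup DD\<^esub>"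
      by (simp add: a one RR_mult_RR s permutes_inv permutes_inv_o(2)[OF s])
    then show ?thesis
      using permutes_inv[OF s] by blast
  qed
qed (auto simp: RR_in_BijGroup RR_mult_RR permutes_compose)

lemma carrier_TRgroup:
  "carrier (TRgroup :: ('n::finite pt \<Rightarrow> 'n pt) monoid) = {restrict (TT L \<circ> RR s) DD | L s. s permutes UNIV}"
proof -
  have "x \<in> carrier TRgroup \<longleftrightarrow>
      (\<exists>L s. s permutes UNIV \<and> x = restrict (TT L) DD \<otimes>\<^bsub>BijGroup DD\<^esub> restrict (RR s) DD)"
    for x :: "'n pt \<Rightarrow> 'n pt"
    by (auto simp: TRgroup_def set_mult_def TgrpN_eq RgrpN_eq)
  then show ?thesis
    by (simp add: TT_mult_RR set_eq_iff conj_commute cong: conj_cong)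
qed

lemma TRgroup_mult:
  assumes "s1 permutes UNIV" "s2 permutes UNIV"
  shows "restrict (TT L1 \<circ> RR s1) DD \<otimes>\<^bsub>TRgroup\<^esub> restrict (TT L2 \<circ> RR s2) DD
    = restrict (TT (L1 \<union> s1 ` L2 - L1 \<inter> s1 ` L2) \<circ> RR (s1 \<circ> s2)) DD"
  unfolding TRgroup_def monoid.simps
proof (rule the_equality)
  fix h
  assume "\<exists>L1' s1' L2' s2'. s1' permutes UNIV \<and> s2' permutes UNIV \<and>
      restrict (TT L1 \<circ> RR s1) DD = restrict (TT L1' \<circ> RR s1') DD \<and>
      restrict (TT L2 \<circ> RR s2) DD = restrict (TT L2' \<circ> RR s2') DD \<and>
      h = restrict (TT (L1' \<union> s1' ` L2' - L1' \<inter> s1' ` L2') \<circ> RR (s1' \<circ> s2')) DD"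
  with assms show "h = restrict (TT (L1 \<union> s1 ` L2 - L1 \<inter> s1 ` L2) \<circ> RR (s1 \<circ> s2)) DD"
    using TT_RR_unique by metis
qed (use assms in blast)

lemma TRgroup_one: "\<one>\<^bsub>TRgroup\<^esub> = restrict (TT {} \<circ> RR id) DD"
  by (simp add: TRgroup_def fun_eq_iff TT_empty RR_id)

section \<open>The isomorphism with \<open>{\<plusminus>1}\<^sup>N \<rtimes> S\<^sub>N\<close>\<close>

lemma signperm_sdp_carrier:
  "(e, s) \<in> carrier signperm_sdp \<longleftrightarrow> (\<forall>i. e i \<in> {-1, 1}) \<and> s permutes UNIV"
  by (simp add: signperm_sdp_def)

lemma signperm_sdp_mult:
  "(e1, s1) \<otimes>\<^bsub>signperm_sdp\<^esub> (e2, s2) = (\<lambda>i. e1 i * e2 (inv_into UNIV s1 i), s1 \<circ> s2)"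
  by (simp add: signperm_sdp_def)

lemma signperm_sdp_one: "\<one>\<^bsub>signperm_sdp\<^esub> = (\<lambda>i. 1, id)"
  by (simp add: signperm_sdp_def)

lemma group_signperm_sdp: "group (signperm_sdp :: (('n::finite \<Rightarrow> int) \<times> ('n \<Rightarrow> 'n)) monoid)"
proof (rule groupI, safe)
  fix e1 e2 e3 :: "'n \<Rightarrow> int" and s1 s2 s3 :: "'n \<Rightarrow> 'n"
  assume "(e1, s1) \<in> carrier signperm_sdp" "(e2, s2) \<in> carrier signperm_sdp"
  then have s: "s1 permutes UNIV" "s2 permutes UNIV" and e: "\<forall>i. e1 i \<in> {-1, 1}" "\<forall>i. e2 i \<in> {-1, 1}"
    by (simp_all add: signperm_sdp_carrier)
  have "e1 i * e2 (inv_into UNIV s1 i) \<in> {-1, 1}" for i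
    using e(1)[rule_format, of i] e(2)[rule_format, of "inv_into UNIV s1 i"] by auto
  with s show "(e1, s1) \<otimes>\<^bsub>signperm_sdp\<^esub> (e2, s2) \<in> carrier signperm_sdp"
    by (simp add: signperm_sdp_mult signperm_sdp_carrier permutes_compose)
  have "inv_into UNIV (s1 \<circ> s2) = inv_into UNIV s2 \<circ> inv_into UNIV s1"
    using s by (simp add: o_inv_distrib permutes_bij)
  then show "(e1, s1) \<otimes>\<^bsub>signperm_sdp\<^esub> (e2, s2) \<otimes>\<^bsub>signperm_sdp\<^esub> (e3, s3)
      = (e1, s1) \<otimes>\<^bsub>signperm_sdp\<^esub> ((e2, s2) \<otimes>\<^bsub>signperm_sdp\<^esub> (e3, s3))"
    by (simp add: signperm_sdp_mult mult.assoc o_assoc)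
next
  fix e :: "'n \<Rightarrow> int" and s :: "'n \<Rightarrow> 'n"
  assume "(e, s) \<in> carrier signperm_sdp"
  then have e: "\<forall>i. e i \<in> {-1, 1}" and s: "s permutes UNIV"
    by (simp_all add: signperm_sdp_carrier)
  have "e (s i) * e (s i) = 1" for i
    using e[rule_format, of "s i"] by auto
  then have "(\<lambda>i. e (s i), inv_into UNIV s) \<otimes>\<^bsub>signperm_sdp\<^esub> (e, s) = \<one>\<^bsub>signperm_sdp\<^esub>"
    by (simp add: signperm_sdp_mult signperm_sdp_one permutes_inv_o[OF s] inv_inv_eq permutes_bij[OF s])
  moreover have "(\<lambda>i. e (s i), inv_into UNIV s) \<in> carrier signperm_sdp"
    using e s by (simp add: signperm_sdp_carrier permutes_inv)
  ultimately show "\<exists>y\<in>carrier signperm_sdp. y \<otimes>\<^bsub>signperm_sdp\<^esub> (e, s) = \<one>\<^bsub>signperm_sdp\<^esub>"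
    by blast
qed (auto simp: signperm_sdp_carrier signperm_sdp_mult signperm_sdp_one permutes_id)

definition neg_support :: "('n \<Rightarrow> int) \<Rightarrow> 'n set" where
  "neg_support e = {i. e i = -1}"

definition TR_of :: "('n::finite \<Rightarrow> int) \<times> ('n \<Rightarrow> 'n) \<Rightarrow> 'n pt \<Rightarrow> 'n pt" where
  "TR_of x = restrict (TT (neg_support (fst x)) \<circ> RR (snd x)) DD"

lemma neg_support_inj:
  assumes "\<forall>i. e1 i \<in> {-1, 1}" "\<forall>i. e2 i \<in> {-1, 1}" "neg_support e1 = neg_support e2"
  shows "e1 = e2"
proof
  fix i
  have "e1 i = -1 \<longleftrightarrow> e2 i = -1"
    using assms(3) unfolding neg_support_def by blast
  with assms(1,2) show "e1 i = e2 i"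
    by (metis insert_iff singletonD)
qed

lemma neg_support_indicator: "neg_support (\<lambda>i. if i \<in> L then -1 else 1) = L"
  by (auto simp: neg_support_def)

lemma neg_support_twisted_mult:
  assumes e1: "\<forall>i. e1 i \<in> {-1, 1}" and e2: "\<forall>i. e2 i \<in> {-1, 1}" and s: "s permutes UNIV"
  shows "neg_support (\<lambda>i. e1 i * e2 (inv_into UNIV s i))
    = neg_support e1 \<union> s ` neg_support e2 - neg_support e1 \<inter> s ` neg_support e2"
proof (rule Set.set_eqI)
  fix i
  have "i \<in> s ` neg_support e2 \<longleftrightarrow> inv_into UNIV s i \<in> neg_support e2"
    using inj_image_mem_iff[OF permutes_inj[OF s]] permutes_inverses(1)[OF s] by metis
  moreover have "e1 i * e2 j = -1 \<longleftrightarrow> (e1 i = -1) \<noteq> (e2 j = -1)" for j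
    using e1[rule_format, of i] e2[rule_format, of j] by auto
  ultimately show "i \<in> neg_support (\<lambda>i. e1 i * e2 (inv_into UNIV s i))
      \<longleftrightarrow> i \<in> neg_support e1 \<union> s ` neg_support e2 - neg_support e1 \<inter> s ` neg_support e2"
    unfolding neg_support_def by blast
qed

lemma TR_of_bij:
  "bij_betw TR_of (carrier (signperm_sdp :: (('n::finite \<Rightarrow> int) \<times> ('n \<Rightarrow> 'n)) monoid)) (carrier TRgroup)"
proof (rule bij_betw_imageI)
  show "inj_on TR_of (carrier (signperm_sdp :: (('n \<Rightarrow> int) \<times> ('n \<Rightarrow> 'n)) monoid))"
  proof (rule inj_onI)
    fix x y :: "('n \<Rightarrow> int) \<times> ('n \<Rightarrow> 'n)"
    assume carrier: "x \<in> carrier signperm_sdp" "y \<in> carrier signperm_sdp"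
      and eq: "TR_of x = TR_of y"
    obtain e1 s1 e2 s2 where xy: "x = (e1, s1)" "y = (e2, s2)"
      by fastforce
    with carrier have e: "\<forall>i. e1 i \<in> {-1, 1}" "\<forall>i. e2 i \<in> {-1, 1}"
      and s: "s1 permutes UNIV" "s2 permutes UNIV"
      by (simp_all add: signperm_sdp_carrier)
    have "neg_support e1 = neg_support e2 \<and> s1 = s2"
      using s eq by (intro TT_RR_unique) (simp_all add: xy TR_of_def)
    then show "x = y"
      using neg_support_inj[OF e] by (simp add: xy)
  qed
  show "TR_of ` carrier signperm_sdp = carrier (TRgroup :: ('n pt \<Rightarrow> 'n pt) monoid)"
    unfolding carrier_TRgroup
  proof safe
    fix L and s :: "'n \<Rightarrow> 'n"
    assume "s permutes UNIV"
    then have "((\<lambda>i. if i \<in> L then -1 else 1), s) \<in> carrier signperm_sdp"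
      by (simp add: signperm_sdp_carrier)
    then show "restrict (TT L \<circ> RR s) DD \<in> TR_of ` carrier signperm_sdp"
      by (rule rev_image_eqI) (simp add: TR_of_def neg_support_indicator)
  qed (auto simp: TR_of_def signperm_sdp_carrier)
qed

lemma TR_of_mult:
  assumes "x \<in> carrier signperm_sdp" "y \<in> carrier signperm_sdp"
  shows "TR_of (x \<otimes>\<^bsub>signperm_sdp\<^esub> y) = TR_of x \<otimes>\<^bsub>TRgroup\<^esub> TR_of y"
proof -
  obtain e1 s1 e2 s2 where xy: "x = (e1, s1)" "y = (e2, s2)"
    by fastforce
  with assms have e: "\<forall>i. e1 i \<in> {-1, 1}" "\<forall>i. e2 i \<in> {-1, 1}" and s: "s1 permutes UNIV" "s2 permutes UNIV"
    by (simp_all add: signperm_sdp_carrier)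
  show ?thesis
    by (simp add: xy TR_of_def signperm_sdp_mult TRgroup_mult[OF s] neg_support_twisted_mult[OF e s(1)])
qed

lemma TR_of_iso: "TR_of \<in> iso signperm_sdp TRgroup"
  using TR_of_bij bij_betw_apply by (fastforce intro: isoI homI TR_of_mult)

lemma TR_of_one: "TR_of \<one>\<^bsub>signperm_sdp\<^esub> = \<one>\<^bsub>TRgroup\<^esub>"
  by (simp add: TR_of_def signperm_sdp_one TRgroup_one neg_support_def)

theorem proposition1:
  shows "(\<forall>(L::'n::finite set). Aut_pi (TT L)) \<and>
         (\<forall>s::'n \<Rightarrow> 'n. s permutes UNIV \<longrightarrow> Aut_pi (RR s)) \<and>
         group (TRgroup :: ('n pt \<Rightarrow> 'n pt) monoid) \<and>
         (TRgroup :: ('n pt \<Rightarrow> 'n pt) monoid) \<cong> (signperm_sdp :: (('n \<Rightarrow> int) \<times> ('n \<Rightarrow> 'n)) monoid)"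
proof (intro conjI allI impI)
  show "Aut_pi (TT L)" for L :: "'n set"
    by (rule Aut_pi_TT)
  show "Aut_pi (RR s)" if "s permutes UNIV" for s :: "'n \<Rightarrow> 'n"
    using that by (rule Aut_pi_RR)
  interpret sdp: group "signperm_sdp :: (('n \<Rightarrow> int) \<times> ('n \<Rightarrow> 'n)) monoid"
    by (rule group_signperm_sdp)
  show "group (TRgroup :: ('n pt \<Rightarrow> 'n pt) monoid)"
    using sdp.iso_imp_img_group[OF TR_of_iso] by (simp add: TR_of_one)
  show "(TRgroup :: ('n pt \<Rightarrow> 'n pt) monoid) \<cong> (signperm_sdp :: (('n \<Rightarrow> int) \<times> ('n \<Rightarrow> 'n)) monoid)"
    by (rule sdp.iso_sym[OF is_isoI[OF TR_of_iso]])
qed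

end
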